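(* Let $p > m \geq 1$ be integers and let $\mathbf{x} \in \mathbb{R}^p$ be a fixed nonzero vector. Let $\mathbf{e}_1, \ldots, \mathbf{e}_m$ be independent random vectors in $\mathbb{R}^p$, each distributed as $\mathcal{N}(0, I_{p\times p})$, let $E \in \mathbb{R}^{p\times m}$ be the matrix with columns $\mathbf{e}_1,\ldots,\mathbf{e}_m$, and let $P = E(E^TE)^{-1}E^T$ (the orthogonal projection onto the span of $\mathbf{e}_1,\ldots,\mathbf{e}_m$). Define the reflection operator $R_{\mathbf{x}}:\mathbb{R}^p\to\mathbb{R}^p$ by $$R_{\mathbf{x}}(\mathbf{y}) = 2\langle \mathbf{y}, \hat{\mathbf{x}}\rangle \hat{\mathbf{x}} - \mathbf{y}, \qquad \hat{\mathbf{x}} = \frac{\mathbf{x}}{\|\mathbf{x}\|}.$$ Then the random vector $P\mathbf{x}$ has the same distribution as the random vector $R_{\mathbf{x}}(P\mathbf{x})$.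
   Context: $\langle\cdot,\cdot\rangle$ and $\|\cdot\|$ denote the standard Euclidean inner product and norm on $\mathbb{R}^p$. $E^TE$ is almost surely invertible, so $P$ is almost surely well defined. *)

theory Defs
  imports "HOL-Probability.Probability"
begin

definition std_gauss_vec :: "(real^'n::finite) measure" where
  "std_gauss_vec = distr (PiM UNIV (\<lambda>_::'n. std_normal_distribution)) borel (\<lambda>f. \<chi> i. f i)"

definition col_matrix :: "('m::finite \<Rightarrow> real^'p::finite) \<Rightarrow> real^'m^'p" where
  "col_matrix e = (\<chi> i j. e j $ i)"

definition proj_mat :: "real^'m::finite^'p::finite \<Rightarrow> real^'p^'p" where
  "proj_mat E = E ** matrix_inv (transpose E ** E) ** transpose E"

definition reflect :: "real^'p::finite \<Rightarrow> real^'p \<Rightarrow> real^'p" where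
  "reflect x y = (let xh = x /\<^sub>R norm x in (2 * (y \<bullet> xh)) *\<^sub>R xh - y)"

end

theory Submission
  imports Defs
begin

text \<open>
  Write \<open>R\<close> for the matrix of the reflection \<open>R\<^sub>x\<close>; it is orthogonal and fixes \<open>x\<close>.
  Replacing every column \<open>e\<^sub>j\<close> by \<open>R e\<^sub>j\<close> turns \<open>P\<close> into \<open>R P R\<^sup>T\<close>, so the
  projection of \<open>x = R\<^sup>T x\<close> becomes \<open>R (P x)\<close>. The standard Gaussian distribution is invariant
  under orthogonal maps (its density depends only on the norm and Lebesgue measure is
  invariant), so by independence the columns \<open>R e\<^sub>j\<close> have the same joint law as the \<open>e\<^sub>j\<close>,
  and hence \<open>R (P x)\<close> has the same law as \<open>P x\<close>.
\<close>

lemma borel_measurable_linear: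
  fixes f :: "'a::euclidean_space \<Rightarrow> 'b::euclidean_space"
  assumes "linear f"
  shows "f \<in> borel_measurable borel"
  using assms by (simp add: borel_measurable_continuous_onI linear_continuous_on linear_linear)

lemma borel_measurable_vec:
  fixes f :: "'a \<Rightarrow> 'b::euclidean_space ^ 'n"
  assumes "\<And>i. (\<lambda>x. f x $ i) \<in> borel_measurable M"
  shows "f \<in> borel_measurable M"
proof (subst borel_measurable_euclidean_space, intro ballI)
  fix b :: "'b^'n" assume "b \<in> Basis"
  then obtain i u where b: "b = axis i u" "u \<in> Basis" by (auto simp: Basis_vec_def)
  have "(\<lambda>x. f x $ i \<bullet> u) \<in> borel_measurable M" using assms[of i] by measurable
  then show "(\<lambda>x. f x \<bullet> b) \<in> borel_measurable M" by (simp add: b inner_axis)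
qed

lemma borel_measurable_vec_nth[measurable (raw)]:
  fixes f :: "'a \<Rightarrow> 'b::euclidean_space ^ 'n"
  assumes "f \<in> borel_measurable M"
  shows "(\<lambda>x. f x $ i) \<in> borel_measurable M"
proof -
  have "(\<lambda>v::'b^'n. v $ i) \<in> borel_measurable borel"
    by (intro borel_measurable_continuous_onI continuous_intros)
  then show ?thesis using assms by (rule measurable_compose[rotated])
qed

subsection \<open>Lebesgue measure is invariant under orthogonal maps\<close>

lemma distr_lborel_orthogonal_wellorder:
  fixes f :: "real^'n::{finite,wellorder} \<Rightarrow> real^'n::_"
  assumes f: "orthogonal_transformation f"
  shows "distr lborel borel f = lborel"
proof (rule lborel_eqI[symmetric])
  have [measurable]: "f \<in> borel_measurable borel"
    using f orthogonal_transformation_linear borel_measurable_linear by blast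
  have g: "orthogonal_transformation (inv f)"
    using f orthogonal_transformation_inv by blast
  fix l u :: "real^'n::_" assume le: "\<And>b. b \<in> Basis \<Longrightarrow> l \<bullet> b \<le> u \<bullet> b"
  have preimage: "f -` box l u = inv f ` box l u"
    using f orthogonal_transformation_bij bij_vimage_eq_inv_image by blast
  have "box l u \<in> lmeasurable" by simp
  note box_image = measurable_orthogonal_image[OF g this] measure_orthogonal_image[OF g this]
  have "f -` box l u \<in> sets borel"
    using measurable_sets_borel[of f borel "box l u"] by simp
  then have "emeasure lborel (f -` box l u) = emeasure lebesgue (inv f ` box l u)"
    by (simp add: preimage)
  also have "\<dots> = emeasure lborel (box l u)"
    using box_image by (simp add: emeasure_eq_measure2)
  finally show "emeasure (distr lborel borel f) (box l u) = (\<Prod>b\<in>Basis. (u - l) \<bullet> b)"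
    using le by (simp add: emeasure_distr emeasure_lborel_box_eq)
qed simp

text \<open>
  The library proves invariance only for well-ordered index types; a general index type
  is reduced to that case through a bijection with the type \<open>'n idx\<close> of the same size.
\<close>

typedef ('n::finite) idx = "{..<CARD('n)}" morphisms nat_of_idx idx_of_nat
  by (rule exI[of _ 0]) simp

instance idx :: (finite) finite
proof
  have "(UNIV :: 'a idx set) = idx_of_nat ` {..<CARD('a)}"
    using type_definition.Abs_image[OF type_definition_idx[where 'n='a]] by simp
  then show "finite (UNIV :: 'a idx set)" by (metis finite_imageI finite_lessThan)
qed

instantiation idx :: (finite) linorder
begin
definition less_eq_idx :: "'a idx \<Rightarrow> 'a idx \<Rightarrow> bool"
  where "less_eq_idx a b \<longleftrightarrow> nat_of_idx a \<le> nat_of_idx b"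
definition less_idx :: "'a idx \<Rightarrow> 'a idx \<Rightarrow> bool"
  where "less_idx a b \<longleftrightarrow> nat_of_idx a < nat_of_idx b"
instance by standard (auto simp: less_eq_idx_def less_idx_def nat_of_idx_inject)
end

instance idx :: (finite) wellorder
proof
  fix P :: "'a idx \<Rightarrow> bool" and a :: "'a idx"
  assume step: "\<And>x. (\<And>y. y < x \<Longrightarrow> P y) \<Longrightarrow> P x"
  have "\<forall>a. nat_of_idx a = n \<longrightarrow> P a" for n
    by (induction n rule: less_induct) (metis step less_idx_def)
  then show "P a" by blast
qed

lemma card_idx: "CARD('n::finite idx) = CARD('n)"
proof -
  have "bij_betw nat_of_idx (UNIV :: 'n idx set) {..<CARD('n)}"
    by (metis bij_betw_def inj_on_def nat_of_idx_inject type_definition.Rep_range type_definition_idx)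
  then show ?thesis using bij_betw_same_card by fastforce
qed

lemma prod_Basis_vec: "(\<Prod>b\<in>(Basis :: (real^'n) set). g b) = (\<Prod>i\<in>UNIV. g (axis i 1))"
proof -
  have "inj (\<lambda>i::'n. axis i (1::real))" by (auto simp: inj_on_def axis_eq_axis)
  moreover have Basis: "(Basis :: (real^'n) set) = range (\<lambda>i. axis i 1)" by (auto simp: Basis_vec_def)
  ultimately show ?thesis by (simp add: Basis prod.reindex)
qed

lemma Basis_le_cart: "(\<forall>b\<in>Basis. (l::real^'n) \<bullet> b \<le> u \<bullet> b) \<longleftrightarrow> (\<forall>i. l $ i \<le> u $ i)"
  by (auto simp: Basis_vec_def cart_eq_inner_axis)

lemma linear_vec_reindex: "linear (\<lambda>v::real^'p. (\<chi> k. v $ \<pi> k) :: real^'q)"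
  by (rule linearI) (simp_all add: vec_eq_iff)

lemma norm_vec_reindex:
  fixes \<pi> :: "'q::finite \<Rightarrow> 'p::finite"
  assumes "bij \<pi>"
  shows "norm ((\<chi> k. v $ \<pi> k) :: real^'q) = norm (v::real^'p)"
proof -
  have "(\<Sum>k\<in>UNIV. (norm (v $ \<pi> k))\<^sup>2) = (\<Sum>i\<in>UNIV. (norm (v $ i))\<^sup>2)"
    using sum.reindex_bij_betw[of \<pi> UNIV UNIV "\<lambda>i. (norm (v $ i))\<^sup>2"] assms by simp
  then show ?thesis by (simp add: norm_vec_def L2_set_def)
qed

lemma distr_lborel_vec_reindex:
  fixes \<pi> :: "'q::finite \<Rightarrow> 'p::finite"
  assumes bij: "bij \<pi>"
  shows "distr lborel borel (\<lambda>v::real^'p. (\<chi> k. v $ \<pi> k) :: real^'q) = lborel"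
proof (rule lborel_eqI[symmetric])
  let ?T = "\<lambda>v::real^'p. (\<chi> k. v $ \<pi> k) :: real^'q"
  note [measurable] = borel_measurable_linear[OF linear_vec_reindex]
  fix l u :: "real^'q" assume "\<And>b. b \<in> Basis \<Longrightarrow> l \<bullet> b \<le> u \<bullet> b"
  then have le: "\<forall>i. l $ i \<le> u $ i" using Basis_le_cart by blast
  let ?l = "(\<chi> i. l $ inv \<pi> i) :: real^'p" and ?u = "(\<chi> i. u $ inv \<pi> i) :: real^'p"
  have preimage: "?T -` box l u = box ?l ?u"
  proof -
    have "(\<forall>k. l $ k < v $ \<pi> k \<and> v $ \<pi> k < u $ k)
        \<longleftrightarrow> (\<forall>i. l $ inv \<pi> i < v $ i \<and> v $ i < u $ inv \<pi> i)" for v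
      using bij by (metis bij_inv_eq_iff)
    then show ?thesis by (auto simp: mem_box_cart)
  qed
  have "(\<Prod>i\<in>UNIV. u $ inv \<pi> i - l $ inv \<pi> i) = (\<Prod>k\<in>UNIV. u $ k - l $ k)"
    using bij bij_imp_bij_inv prod.reindex_bij_betw[of "inv \<pi>" UNIV UNIV "\<lambda>k. u $ k - l $ k"]
    by blast
  moreover have "\<forall>b\<in>Basis. ?l \<bullet> b \<le> ?u \<bullet> b" using le Basis_le_cart[of ?l ?u] by simp
  ultimately show "emeasure (distr lborel borel ?T) (box l u) = (\<Prod>b\<in>Basis. (u - l) \<bullet> b)"
    by (simp add: emeasure_distr preimage emeasure_lborel_box_eq prod_Basis_vec inner_axis)
qed simp

lemma distr_lborel_orthogonal:
  fixes f :: "real^'p::finite \<Rightarrow> real^'p"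
  assumes f: "orthogonal_transformation f"
  shows "distr lborel borel f = lborel"
proof -
  obtain \<pi> :: "'p idx \<Rightarrow> 'p" where bij: "bij \<pi>"
    using finite_same_card_bij[of "UNIV :: 'p idx set" "UNIV :: 'p set"] card_idx by auto
  then have bij': "bij (inv \<pi>)" using bij_imp_bij_inv by blast
  define T :: "real^'p \<Rightarrow> real^'p idx" where "T v = (\<chi> k. v $ \<pi> k)" for v
  define T' :: "real^'p idx \<Rightarrow> real^'p" where "T' w = (\<chi> i. w $ inv \<pi> i)" for w
  have T'T: "T' (T v) = v" for v
    using bij by (simp add: T_def T'_def vec_eq_iff bij_is_surj surj_f_inv_f)
  have TT': "T (T' w) = w" for w
    using bij by (simp add: T_def T'_def vec_eq_iff bij_is_inj inv_f_f)
  have linT: "linear T" and linT': "linear T'"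
    unfolding T_def T'_def by (rule linear_vec_reindex)+
  have linf: "linear f" using f orthogonal_transformation_linear by blast
  note [measurable] = borel_measurable_linear[OF linT] borel_measurable_linear[OF linT']
    borel_measurable_linear[OF linf]
  have "orthogonal_transformation (T \<circ> f \<circ> T')"
    using f linT linT' unfolding orthogonal_transformation
    by (simp add: T_def T'_def norm_vec_reindex[OF bij] norm_vec_reindex[OF bij'] linear_compose)
  then have rotate: "distr lborel borel (T \<circ> f \<circ> T') = lborel"
    by (rule distr_lborel_orthogonal_wellorder)
  have to_idx: "distr lborel borel T = lborel"
    unfolding T_def by (rule distr_lborel_vec_reindex[OF bij])
  have "distr lborel borel T' = distr (distr lborel borel T) borel T'" by (simp add: to_idx)
  also have "\<dots> = lborel" by (simp add: distr_distr comp_def T'T distr_id2)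
  finally have from_idx: "distr lborel borel T' = lborel" .
  have "f = T' \<circ> (T \<circ> f \<circ> T') \<circ> T" using T'T TT' by auto
  then have "distr lborel borel f = distr (distr (distr lborel borel T) borel (T \<circ> f \<circ> T')) borel T'"
    by (simp add: distr_distr comp_assoc)
  then show ?thesis by (simp add: to_idx rotate from_idx)
qed

subsection \<open>The standard Gaussian vector is invariant under orthogonal maps\<close>

lemma measurable_vec_lambda_PiM:
  assumes "sets M = sets borel"
  shows "(\<lambda>f. \<chi> i. f i) \<in> measurable (PiM UNIV (\<lambda>_::'n::finite. M)) (borel :: (real^'n) measure)"
  by (rule borel_measurable_vec)
    (simp add: measurable_cong_sets[OF refl assms[symmetric]] measurable_component_singleton)

lemma prob_space_std_gauss_vec: "prob_space (std_gauss_vec :: (real^'n::finite) measure)"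
  unfolding std_gauss_vec_def
  by (intro prob_space.prob_space_distr prob_space_PiM prob_space_normal_density
      measurable_vec_lambda_PiM) simp_all

definition gauss_vec_density :: "real^'n::finite \<Rightarrow> real" where
  "gauss_vec_density y = (\<Prod>i\<in>UNIV. std_normal_density (y $ i))"

lemma borel_measurable_gauss_vec_density[measurable]: "gauss_vec_density \<in> borel_measurable borel"
  unfolding gauss_vec_density_def by measurable

lemma gauss_vec_density_eq_norm:
  "gauss_vec_density (y::real^'n::finite) = (1 / sqrt (2 * pi)) ^ CARD('n) * exp (- (norm y)\<^sup>2 / 2)"
proof -
  have "gauss_vec_density y = (\<Prod>i\<in>UNIV. (1 / sqrt (2 * pi)) * exp (- (y $ i)\<^sup>2 / 2))"
    by (simp add: gauss_vec_density_def std_normal_density_def)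
  also have "\<dots> = (1 / sqrt (2 * pi)) ^ CARD('n) * exp (\<Sum>i\<in>UNIV. - (y $ i)\<^sup>2 / 2)"
    by (simp only: prod.distrib prod_constant) (simp add: exp_sum)
  also have "(\<Sum>i\<in>UNIV. - (y $ i)\<^sup>2 / 2) = - (norm y)\<^sup>2 / 2"
    by (simp add: norm_vec_def L2_set_def sum_nonneg sum_negf sum_divide_distrib)
  finally show ?thesis .
qed

lemma std_gauss_vec_eq_density:
  "(std_gauss_vec :: (real^'n::finite) measure) = density lborel (\<lambda>y. ennreal (gauss_vec_density y))"
proof (rule measure_eqI_generator_eq[where E="range (\<lambda>(a, b). box a b)" and \<Omega>=UNIV
        and A="\<lambda>n::nat. box (- (real n *\<^sub>R One)) (real n *\<^sub>R One)"])
  show "Int_stable (range (\<lambda>(a, b). box a b :: (real^'n) set))"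
    by (auto simp: Int_stable_def box_Int_box)
  show "range (\<lambda>(a, b). box a b :: (real^'n) set) \<subseteq> Pow UNIV" by simp
  show "sets (std_gauss_vec :: (real^'n) measure) = sigma_sets UNIV (range (\<lambda>(a, b). box a b))"
    by (simp add: std_gauss_vec_def borel_eq_box)
  show "sets (density lborel (\<lambda>y. ennreal (gauss_vec_density y)) :: (real^'n) measure)
      = sigma_sets UNIV (range (\<lambda>(a, b). box a b))"
    by (simp add: borel_eq_box)
  show "range (\<lambda>n::nat. box (- (real n *\<^sub>R One)) (real n *\<^sub>R One) :: (real^'n) set)
      \<subseteq> range (\<lambda>(a, b). box a b)"
    by auto
  show "(\<Union>n::nat. box (- (real n *\<^sub>R One)) (real n *\<^sub>R One) :: (real^'n) set) = UNIV"
    by (rule UN_box_eq_UNIV)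
  show "emeasure std_gauss_vec (box (- (real n *\<^sub>R One)) (real n *\<^sub>R One) :: (real^'n) set) \<noteq> \<infinity>"
    for n
    using prob_space_std_gauss_vec finite_measure.emeasure_finite prob_space_def
    by (metis infinity_ennreal_def)
  fix X :: "(real^'n) set" assume "X \<in> range (\<lambda>(a, b). box a b)"
  then obtain l u where X: "X = box l u" by auto
  let ?N = "density lborel std_normal_density"
  interpret product_sigma_finite "\<lambda>_::'n. ?N"
    unfolding product_sigma_finite_def
    by (simp add: prob_space_normal_density prob_space_imp_sigma_finite)
  have "(\<lambda>f. \<chi> i. f i) \<in> measurable (PiM UNIV (\<lambda>_::'n. ?N)) (borel :: (real^'n) measure)"
    by (rule measurable_vec_lambda_PiM) simp
  moreover have preimage: "(\<lambda>f. \<chi> i. f i) -` box l u \<inter> space (PiM UNIV (\<lambda>_::'n. ?N))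
      = PiE UNIV (\<lambda>i. {l$i<..<u$i})"
    by (auto simp: space_PiM mem_box_cart PiE_def Pi_def extensional_def)
  ultimately have "emeasure std_gauss_vec X
      = emeasure (PiM UNIV (\<lambda>_::'n. ?N)) (PiE UNIV (\<lambda>i. {l$i<..<u$i}))"
    unfolding std_gauss_vec_def X by (simp add: emeasure_distr)
  also have "\<dots> = (\<Prod>i\<in>UNIV. emeasure ?N {l$i<..<u$i})"
    by (rule emeasure_PiM) auto
  also have "\<dots> = (\<Prod>i\<in>UNIV. \<integral>\<^sup>+t. ennreal (std_normal_density t * indicator {l$i<..<u$i} t) \<partial>lborel)"
    by (intro prod.cong refl) (simp add: emeasure_density ennreal_mult' ennreal_indicator)
  also have "\<dots> = (\<integral>\<^sup>+y. ennreal (\<Prod>i\<in>UNIV. std_normal_density (y $ i) * indicator {l$i<..<u$i} (y $ i)) \<partial>lborel)"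
    using nn_integral_lborel_prod[of "\<lambda>b t. std_normal_density t * indicator {l \<bullet> b<..<u \<bullet> b} t"]
    by (simp add: prod_Basis_vec cart_eq_inner_axis[symmetric] prod_ennreal)
  also have "\<dots> = (\<integral>\<^sup>+y. ennreal (gauss_vec_density y) * indicator X y \<partial>lborel)"
  proof (intro nn_integral_cong)
    fix y :: "real^'n"
    have "(\<Prod>i\<in>UNIV. indicator {l$i<..<u$i} (y $ i) :: real) = indicator X y"
      by (auto simp: X mem_box_cart indicator_def prod_zero_iff)
    then show "ennreal (\<Prod>i\<in>UNIV. std_normal_density (y $ i) * indicator {l$i<..<u$i} (y $ i))
        = ennreal (gauss_vec_density y) * indicator X y"
      by (simp add: prod.distrib gauss_vec_density_def ennreal_mult' ennreal_indicator prod_nonneg)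
  qed
  also have "\<dots> = emeasure (density lborel (\<lambda>y. ennreal (gauss_vec_density y))) X"
    by (simp add: emeasure_density X)
  finally show "emeasure std_gauss_vec X = emeasure (density lborel (\<lambda>y. ennreal (gauss_vec_density y))) X" .
qed

lemma distr_std_gauss_vec_orthogonal:
  fixes f :: "real^'n::finite \<Rightarrow> real^'n"
  assumes f: "orthogonal_transformation f"
  shows "distr std_gauss_vec borel f = std_gauss_vec"
proof -
  note [measurable] = borel_measurable_linear[OF orthogonal_transformation_linear[OF f]]
  have density_f: "gauss_vec_density (f y) = gauss_vec_density y" for y
    using f by (simp add: gauss_vec_density_eq_norm orthogonal_transformation)
  have "density lborel (\<lambda>y. ennreal (gauss_vec_density y))
      = density (distr lborel borel f) (\<lambda>y. ennreal (gauss_vec_density y))"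
    by (simp add: distr_lborel_orthogonal[OF f])
  also have "\<dots> = distr (density lborel (\<lambda>y. ennreal (gauss_vec_density (f y)))) borel f"
    by (rule density_distr) measurable
  finally show ?thesis by (simp add: density_f std_gauss_vec_eq_density[symmetric])
qed

lemma borel_measurable_matrix_matrix_mult[measurable (raw)]:
  fixes f :: "'a \<Rightarrow> real^'n^'m" and g :: "'a \<Rightarrow> real^'k^'n"
  assumes [measurable]: "f \<in> borel_measurable M" "g \<in> borel_measurable M"
  shows "(\<lambda>x. f x ** g x) \<in> borel_measurable M"
  by (intro borel_measurable_vec) (simp add: matrix_matrix_mult_def)

lemma borel_measurable_matrix_vector_mult[measurable (raw)]:
  fixes f :: "'a \<Rightarrow> real^'n^'m" and g :: "'a \<Rightarrow> real^'n"
  assumes [measurable]: "f \<in> borel_measurable M" "g \<in> borel_measurable M"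
  shows "(\<lambda>x. f x *v g x) \<in> borel_measurable M"
  by (intro borel_measurable_vec) (simp add: matrix_vector_mult_def)

lemma borel_measurable_transpose[measurable (raw)]:
  fixes f :: "'a \<Rightarrow> real^'n^'m"
  assumes [measurable]: "f \<in> borel_measurable M"
  shows "(\<lambda>x. transpose (f x)) \<in> borel_measurable M"
  by (intro borel_measurable_vec) (simp add: transpose_def)

lemma borel_measurable_det[measurable]: "(det :: real^'n::finite^'n \<Rightarrow> real) \<in> borel_measurable borel"
  unfolding det_def by measurable

lemma matrix_inv_cramer:
  fixes A :: "real^'n::finite^'n"
  assumes "det A \<noteq> 0"
  shows "matrix_inv A $ r $ c = det (\<chi> i j. if j = r then axis c 1 $ i else A $ i $ j) / det A"
proof -
  have "invertible A" using assms by (simp add: invertible_det_nz)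
  then have "A ** matrix_inv A = mat 1"
    unfolding invertible_def matrix_inv_def by (rule someI2_ex) blast
  then have "A *v (matrix_inv A *v axis c 1) = axis c 1"
    by (simp add: matrix_vector_mul_assoc)
  then have "matrix_inv A *v axis c 1 = (\<chi> k. det (\<chi> i j. if j = k then axis c 1 $ i else A $ i $ j) / det A)"
    using cramer[OF assms] by blast
  moreover have "(matrix_inv A *v axis c 1) $ r = matrix_inv A $ r $ c"
    by (simp add: matrix_vector_mult_def axis_def if_distrib cong: if_cong)
  ultimately show ?thesis by simp
qed

text \<open>The inverse of a singular matrix is the junk value \<open>SOME A'. False\<close>, the same for all of them.\<close>

lemma matrix_inv_singular:
  fixes A :: "real^'n::finite^'n"
  assumes "det A = 0"
  shows "matrix_inv A = matrix_inv (0 :: real^'n^'n)"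
proof -
  have "\<not> invertible A" using assms by (simp add: invertible_det_nz)
  moreover have "\<not> invertible (0 :: real^'n^'n)"
    by (auto simp: invertible_def vec_eq_iff mat_def)
  ultimately show ?thesis
    unfolding matrix_inv_def invertible_def by (metis (no_types, lifting))
qed

lemma borel_measurable_matrix_inv[measurable]:
  "(matrix_inv :: real^'n::finite^'n \<Rightarrow> real^'n^'n) \<in> borel_measurable borel"
proof -
  have [measurable]: "(\<lambda>A::real^'n^'n. det (\<chi> i j. if j = r then axis c 1 $ i else A $ i $ j))
      \<in> borel_measurable borel" for r c :: 'n
    by (rule measurable_compose[OF _ borel_measurable_det]) (intro borel_measurable_vec; simp)
  have "(\<lambda>A::real^'n^'n. if det A = 0 then matrix_inv 0
        else \<chi> r c. det (\<chi> i j. if j = r then axis c 1 $ i else A $ i $ j) / det A)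
      \<in> borel_measurable borel"
    by (intro measurable_If borel_measurable_vec) simp_all
  then show ?thesis
    by (rule measurable_cong[THEN iffD1, rotated])
      (simp add: matrix_inv_singular matrix_inv_cramer vec_eq_iff)
qed

lemma borel_measurable_proj_mat[measurable]:
  "(proj_mat :: real^'m::finite^'p::finite \<Rightarrow> real^'p^'p) \<in> borel_measurable borel"
  unfolding proj_mat_def by measurable

lemma measurable_col_matrix[measurable]:
  "(col_matrix :: ('m::finite \<Rightarrow> real^'p::finite) \<Rightarrow> real^'m^'p)
    \<in> borel_measurable (PiM UNIV (\<lambda>_. borel))"
  unfolding col_matrix_def by (intro borel_measurable_vec) (simp add: measurable_component_singleton)

subsection \<open>Orthogonal equivariance of the projection\<close>

lemma col_matrix_matrix_vector_mult: "col_matrix (\<lambda>j. H *v v j) = H ** col_matrix v"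
  by (simp add: col_matrix_def matrix_matrix_mult_def matrix_vector_mult_def vec_eq_iff)

lemma proj_mat_orthogonal_conj:
  assumes "orthogonal_matrix H"
  shows "proj_mat (H ** E) = H ** proj_mat E ** transpose H"
proof -
  have "transpose (H ** E) ** (H ** E) = transpose E ** (transpose H ** H) ** E"
    by (simp add: matrix_transpose_mul matrix_mul_assoc)
  also have "\<dots> = transpose E ** E"
    using assms by (simp add: orthogonal_matrix_def)
  finally show ?thesis
    by (simp add: proj_mat_def matrix_transpose_mul matrix_mul_assoc)
qed

lemma proj_mat_col_matrix_orthogonal:
  assumes H: "orthogonal_matrix H" and fix_x: "H *v x = x"
  shows "proj_mat (col_matrix (\<lambda>j. H *v v j)) *v x = H *v (proj_mat (col_matrix v) *v x)"
proof -
  have "transpose H *v x = (transpose H ** H) *v x"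
    by (simp add: fix_x flip: matrix_vector_mul_assoc)
  also have "\<dots> = x" using H by (simp add: orthogonal_matrix_def)
  finally have "transpose H *v x = x" .
  then show ?thesis
    by (simp add: col_matrix_matrix_vector_mult proj_mat_orthogonal_conj[OF H]
        flip: matrix_vector_mul_assoc)
qed

lemma linear_reflect: "linear (reflect x)"
  by (rule linearI) (simp_all add: reflect_def Let_def inner_add_left algebra_simps)

lemma orthogonal_transformation_reflect: "orthogonal_transformation (reflect x)"
proof -
  define u where "u = x /\<^sub>R norm x"
  have "u \<bullet> u = 1 \<or> u = 0"
    by (cases "x = 0") (simp_all add: u_def inner_commute dot_square_norm power2_eq_square[symmetric])
  then have uu: "(v \<bullet> u) * (w \<bullet> u) * (u \<bullet> u) = (v \<bullet> u) * (w \<bullet> u)" for v w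
    by auto
  have "reflect x v \<bullet> reflect x w
      = 4 * ((v \<bullet> u) * (w \<bullet> u) * (u \<bullet> u)) - 4 * ((v \<bullet> u) * (w \<bullet> u)) + v \<bullet> w" for v w
    by (simp add: reflect_def Let_def u_def[symmetric] inner_diff_left inner_diff_right inner_commute
        algebra_simps)
  then have "reflect x v \<bullet> reflect x w = v \<bullet> w" for v w
    by (simp only: uu)
  then show ?thesis
    unfolding orthogonal_transformation_def using linear_reflect by simp
qed

lemma reflect_self:
  assumes "x \<noteq> 0"
  shows "reflect x x = x"
proof -
  have "x \<bullet> (x /\<^sub>R norm x) = norm x"
    using assms by (simp add: dot_square_norm power2_eq_square)
  then have "reflect x x = (2 * norm x / norm x) *\<^sub>R x - x"
    by (simp add: reflect_def Let_def)
  then show ?thesis using assms by (simp add: scaleR_2)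
qed

lemma (in prob_space) distr_indep_vars_compose_invariant:
  assumes "I \<noteq> {}" and indep: "indep_vars N X I"
    and f: "\<And>i. i \<in> I \<Longrightarrow> f i \<in> measurable (N i) (N i)"
    and invariant: "\<And>i. i \<in> I \<Longrightarrow> distr M (N i) (\<lambda>\<omega>. f i (X i \<omega>)) = distr M (N i) (X i)"
  shows "distr M (PiM I N) (\<lambda>\<omega>. \<lambda>i\<in>I. f i (X i \<omega>)) = distr M (PiM I N) (\<lambda>\<omega>. \<lambda>i\<in>I. X i \<omega>)"
proof -
  have X: "random_variable (N i) (X i)" if "i \<in> I" for i
    using indep that by (simp add: indep_vars_def)
  have fX: "random_variable (N i) (\<lambda>\<omega>. f i (X i \<omega>))" if "i \<in> I" for i
    using measurable_compose[OF X f] that by simp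
  have "indep_vars N (\<lambda>i \<omega>. f i (X i \<omega>)) I"
    using indep f by (rule indep_vars_compose2)
  then have "distr M (PiM I N) (\<lambda>\<omega>. \<lambda>i\<in>I. f i (X i \<omega>)) = PiM I (\<lambda>i. distr M (N i) (X i))"
    using indep_vars_iff_distr_eq_PiM'[OF \<open>I \<noteq> {}\<close> fX] invariant by (simp cong: PiM_cong)
  also have "\<dots> = distr M (PiM I N) (\<lambda>\<omega>. \<lambda>i\<in>I. X i \<omega>)"
    using indep_vars_iff_distr_eq_PiM'[OF \<open>I \<noteq> {}\<close> X] indep by simp
  finally show ?thesis .
qed

theorem lemma1:
  fixes M :: "'a measure"
    and e :: "'m::finite \<Rightarrow> 'a \<Rightarrow> real^'p::finite"
    and x :: "real^'p"
  assumes "prob_space M"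
    and "CARD('m) < CARD('p)"
    and "x \<noteq> 0"
    and "prob_space.indep_vars M (\<lambda>_. borel) e UNIV"
    and "\<And>j. distr M borel (e j) = std_gauss_vec"
  shows "distr M borel (\<lambda>\<omega>. proj_mat (col_matrix (\<lambda>j. e j \<omega>)) *v x)
       = distr M borel (\<lambda>\<omega>. reflect x (proj_mat (col_matrix (\<lambda>j. e j \<omega>)) *v x))"
proof -
  interpret prob_space M by fact
  define F where "F v = proj_mat (col_matrix v) *v x" for v :: "'m \<Rightarrow> real^'p"
  have [measurable]: "F \<in> borel_measurable (PiM UNIV (\<lambda>_. borel))"
    unfolding F_def by measurable
  note [measurable] = borel_measurable_linear[OF linear_reflect]
  have matrix_reflect: "matrix (reflect x) *v y = reflect x y" for y
    using matrix_vector_mul(2)[OF linear_reflect] by metis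
  have "orthogonal_matrix (matrix (reflect x))"
    using orthogonal_transformation_reflect orthogonal_transformation_matrix by blast
  then have reflect_F: "reflect x (F v) = F (\<lambda>j. reflect x (v j))" for v
    using proj_mat_col_matrix_orthogonal[of "matrix (reflect x)" x v] reflect_self[OF \<open>x \<noteq> 0\<close>]
    by (simp add: F_def matrix_reflect)
  have e: "random_variable borel (e j)" for j
    using assms(4) by (simp add: indep_vars_def)
  have "distr M borel (\<lambda>\<omega>. reflect x (e j \<omega>)) = distr (distr M borel (e j)) borel (reflect x)" for j
    by (simp add: distr_distr e comp_def)
  also have "\<dots> j = distr M borel (e j)" for j
    by (simp add: assms(5) distr_std_gauss_vec_orthogonal orthogonal_transformation_reflect)
  finally have joint: "distr M (PiM UNIV (\<lambda>_. borel)) (\<lambda>\<omega> j. reflect x (e j \<omega>))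
      = distr M (PiM UNIV (\<lambda>_. borel)) (\<lambda>\<omega> j. e j \<omega>)"
    using distr_indep_vars_compose_invariant[OF UNIV_not_empty assms(4), of "\<lambda>_. reflect x"]
    by (simp add: restrict_UNIV)
  have [measurable]: "(\<lambda>\<omega> j. e j \<omega>) \<in> measurable M (PiM UNIV (\<lambda>_. borel))"
    and [measurable]: "(\<lambda>\<omega> j. reflect x (e j \<omega>)) \<in> measurable M (PiM UNIV (\<lambda>_. borel))"
    using e by (auto intro!: measurable_PiM_single')
  have "distr M borel (\<lambda>\<omega>. reflect x (F (\<lambda>j. e j \<omega>)))
      = distr M borel (\<lambda>\<omega>. F (\<lambda>j. reflect x (e j \<omega>)))"
    by (simp only: reflect_F)
  also have "\<dots> = distr (distr M (PiM UNIV (\<lambda>_. borel)) (\<lambda>\<omega> j. reflect x (e j \<omega>))) borel F"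
    by (simp add: distr_distr comp_def)
  also have "\<dots> = distr M borel (\<lambda>\<omega>. F (\<lambda>j. e j \<omega>))"
    by (simp add: joint distr_distr comp_def)
  finally show ?thesis by (simp add: F_def)
qed

end
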